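(* Let $\{x^k\}$ be generated by the ABP algorithm described in the context and assume (A1)–(A6), (A7') and (A8) below: (A1) $\mathcal F$ is continuously differentiable; (A2) $C$ and $Q$ are nonempty, closed and convex, and $z_i^*>-\infty$ for each $i$; (A3) each $f_i$ is convex; (A4) $\Omega\neq\emptyset$; (A5) $\lambda_k>0$, $\sum_k\lambda_k=\infty$, $\sum_k\lambda_k^2<\infty$; (A6) $\underline\alpha\le\alpha_k\le\bar\alpha$, $\underline\beta\le\beta_k\le\bar\beta$, $\underline\gamma\le\gamma_k\le\bar\gamma$ for all $k$, for constants $0<\underline\alpha\le\bar\alpha$, $0<\underline\beta\le\bar\beta$, $0<\underline\gamma\le\bar\gamma$; (A7') $\sigma:=\varphi^*-\varphi_{\mathrm{lb}}\le\varepsilon_0$ for a known constant $\varepsilon_0\ge0$; (A8) $\sup_k\|x^k\|\le B<\infty$. Let $\bar M<\infty$ be a uniform bound $\|d^k\|\le\bar M$ for all $k$ (which exists under these assumptions), $\bar\eta:=\max(\mu,\bar M)$ and $C_*:=\bar\alpha\bar\eta/\mu$. Then there exist a subsequence $\{k_j\}$ and a constant $\ell_*\in[0,C_*\varepsilon_0]$ with $\Phi_{k_j}\to\ell_*$ such that every cluster point $\hat x$ of $\{x^{k_j}\}$ satisfies: (i) $H(\hat x)\le \ell_*/\underline\beta\le C_*\varepsilon_0/\underline\beta$, i.e. $\mathrm{dist}(\hat x,C)\le\sqrt{2C_*\varepsilon_0/\underline\beta}$; (ii) $G(\hat x)\le\ell_*/\underline\gamma\le C_*\varepsilon_0/\underline\gamma$,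 i.e. $\mathrm{dist}(\mathcal F(\hat x),Q^+)\le\sqrt{2C_*\varepsilon_0/\underline\gamma}$; (iii) $\varphi(\hat x)\le\varphi_{\mathrm{lb}}+\ell_*/\underline\alpha\le\varphi^*+C_*\varepsilon_0/\underline\alpha$. Moreover, when $\varepsilon_0=0$, one has $\ell_*=0$, all three bounds vanish, and $\hat x\in\Omega$.
   Context: Let $n,m\ge1$, $\mathcal F=(f_1,\dots,f_m)\colon\mathbb R^n\to\mathbb R^m$, $C\subset\mathbb R^n$, $Q\subset\mathbb R^m$, and $Q^+:=Q-\mathbb R^m_+=\{y-u:y\in Q,u\in\mathbb R^m_+\}$. $P_S$ denotes Euclidean projection onto a nonempty closed convex set $S$. Let $z_i^*:=\inf_{x\in C}f_i(x)$, fix $r\in\mathbb R^m$ with all $r_i>0$, $\sum_ir_i=1$. Define $\varphi(x):=\max_i r_i(f_i(x)-z_i^* )$, $H(x):=\tfrac12\mathrm{dist}^2(x,C)$, $G(x):=\tfrac12\mathrm{dist}^2(\mathcal F(x),Q^+)$, $\mathcal S:=\{x:H(x)=0,G(x)=0\}$, $\varphi^*:=\inf_{\mathcal S}\varphi$, $\Omega:=\{x\in\mathcal S:\varphi(x)=\varphi^*\}$, $\varphi_{\mathrm{lb}}:=\inf_{x\in C}\varphi(x)$. ABP algorithm: given $x^0\in\mathbb R^n$, $\mu>0$, positive sequences $\{\alpha_k\},\{\beta_k\},\{\gamma_k\},\{\lambda_k\}$, for each $k$: $p^k:=P_{Q^+}(\mathcal F(x^k))$, $\rho^k:=\mathcal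 F(x^k)-p^k$, $z^k:=x^k-P_C(x^k)$, $v^k:=J_{\mathcal F}(x^k)^T\rho^k$, $w^k:=r_{i^*}\nabla f_{i^*}(x^k)$ for an arbitrary $i^*\in\arg\max_ir_i(f_i(x^k)-z_i^* )$, $\Delta_k:=\varphi(x^k)-\varphi_{\mathrm{lb}}$, $d^k:=\alpha_k\mathbf 1_{\{\Delta_k\ge0\}}w^k+\beta_kz^k+\gamma_kv^k$, $\eta_k:=\max(\mu,\|d^k\|)$, $x^{k+1}:=x^k-(\lambda_k/\eta_k)d^k$. Notation: $H_k:=H(x^k)$, $G_k:=G(x^k)$, $\Delta_k^+:=\max(\Delta_k,0)$, $\Phi_k:=\alpha_k\Delta_k^++\beta_kH_k+\gamma_kG_k$. *)

theory Defs
  imports "HOL-Analysis.Analysis"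
begin

definition zstar :: "(real^'n \<Rightarrow> real^'m) \<Rightarrow> (real^'n) set \<Rightarrow> 'm \<Rightarrow> real" where
  "zstar F C i = Inf ((\<lambda>x. F x $ i) ` C)"

definition phi :: "(real^'n \<Rightarrow> real^'m::finite) \<Rightarrow> (real^'n) set \<Rightarrow> real^'m \<Rightarrow> real^'n \<Rightarrow> real" where
  "phi F C r x = Max (range (\<lambda>i. r $ i * (F x $ i - zstar F C i)))"

definition Hfun :: "(real^'n) set \<Rightarrow> real^'n \<Rightarrow> real" where
  "Hfun C x = (infdist x C)\<^sup>2 / 2"

definition Qplus :: "(real^'m) set \<Rightarrow> (real^'m) set" where
  "Qplus Q = {y - u | y u. y \<in> Q \<and> (\<forall>i. 0 \<le> u $ i)}"

definition Gfun :: "(real^'n \<Rightarrow> real^'m) \<Rightarrow> (real^'m) set \<Rightarrow> real^'n \<Rightarrow> real" where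
  "Gfun F Q x = (infdist (F x) (Qplus Q))\<^sup>2 / 2"

definition feas :: "(real^'n \<Rightarrow> real^'m) \<Rightarrow> (real^'n) set \<Rightarrow> (real^'m) set \<Rightarrow> (real^'n) set" where
  "feas F C Q = {x. Hfun C x = 0 \<and> Gfun F Q x = 0}"

definition phistar :: "(real^'n \<Rightarrow> real^'m::finite) \<Rightarrow> (real^'n) set \<Rightarrow> (real^'m) set \<Rightarrow> real^'m \<Rightarrow> real" where
  "phistar F C Q r = Inf (phi F C r ` feas F C Q)"

definition Omega :: "(real^'n \<Rightarrow> real^'m::finite) \<Rightarrow> (real^'n) set \<Rightarrow> (real^'m) set \<Rightarrow> real^'m \<Rightarrow> (real^'n) set" where
  "Omega F C Q r = {x \<in> feas F C Q. phi F C r x = phistar F C Q r}"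

definition philb :: "(real^'n \<Rightarrow> real^'m::finite) \<Rightarrow> (real^'n) set \<Rightarrow> real^'m \<Rightarrow> real" where
  "philb F C r = Inf (phi F C r ` C)"

text \<open>Search direction d^k of the ABP algorithm at the iterate xk, with weights a = alpha_k,
  b = beta_k, c = gamma_k and selected index i (an element of the argmax).
  grad i y is the gradient of f_i at y, so J_F(y)^T rho = sum_i rho_i grad i y.
  The projection onto Q^+ is taken onto its closure (equal to Q^+ whenever Q^+ is closed).\<close>
definition abp_dir ::
  "(real^'n \<Rightarrow> real^'m::finite) \<Rightarrow> ('m \<Rightarrow> real^'n \<Rightarrow> real^'n) \<Rightarrow> (real^'n) set \<Rightarrow> (real^'m) set
    \<Rightarrow> real^'m \<Rightarrow> real \<Rightarrow> real \<Rightarrow> real \<Rightarrow> 'm \<Rightarrow> real^'n \<Rightarrow> real^'n" where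
  "abp_dir F grad C Q r a b c i xk =
     (let p = closest_point (closure (Qplus Q)) (F xk);
          \<rho> = F xk - p;
          z = xk - closest_point C xk;
          v = (\<Sum>j\<in>UNIV. (\<rho> $ j) *\<^sub>R grad j xk);
          w = (r $ i) *\<^sub>R grad i xk;
          \<Delta> = phi F C r xk - philb F C r
      in (if \<Delta> \<ge> 0 then a else 0) *\<^sub>R w + b *\<^sub>R z + c *\<^sub>R v)"

definition Phival ::
  "(real^'n \<Rightarrow> real^'m::finite) \<Rightarrow> (real^'n) set \<Rightarrow> (real^'m) set \<Rightarrow> real^'m
    \<Rightarrow> real \<Rightarrow> real \<Rightarrow> real \<Rightarrow> real^'n \<Rightarrow> real" where
  "Phival F C Q r a b c xk =
     a * max (phi F C r xk - philb F C r) 0 + b * Hfun C xk + c * Gfun F Q xk"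

end

theory Submission
  imports Defs
begin

(*
  Fix x* in Omega.  Convexity of the f_i and the obtuse-angle property of the projections onto C and
  onto the closure of Q^+ give  Phi_k - alpha_k sigma <= <d^k, x^k - x*>; the residual F(x^k) - p^k is
  componentwise nonnegative because Q^+ is stable under subtracting nonnegative vectors.  Hence every
  normalised step satisfies
    |x^{k+1} - x*|^2 <= |x^k - x*|^2 - 2 (lambda_k / eta_k) (Phi_k - alpha_hi eps0) + lambda_k^2.
  If Phi_k stayed above alpha_hi eps0 + e, summing these inequalities would bound sum lambda_k, so
  liminf Phi_k <= alpha_hi eps0 <= C_* eps0 and some subsequence of Phi_k converges to such an ell.
  Finally beta_lo H, gamma_lo G and alpha_lo (phi - phi_lb) are continuous lower bounds of Phi_k, so
  the bounds pass to every cluster point.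
*)

lemma convex_on_imp_above_tangent_linear:
  fixes f :: "'a::real_normed_vector \<Rightarrow> real"
  assumes convex: "convex_on UNIV f" and deriv: "(f has_derivative f') (at x)"
  shows "f x + f' (y - x) \<le> f y"
proof -
  define q where "q t = f (x + t *\<^sub>R (y - x))" for t
  have "convex_on UNIV q"
  proof (rule convex_onI)
    fix t a b :: real
    have "x + ((1 - t) * a + t * b) *\<^sub>R (y - x)
        = (1 - t) *\<^sub>R (x + a *\<^sub>R (y - x)) + t *\<^sub>R (x + b *\<^sub>R (y - x))"
      by (simp add: algebra_simps)
    moreover assume "0 < t" "t < 1"
    ultimately show "q ((1 - t) *\<^sub>R a + t *\<^sub>R b) \<le> (1 - t) * q a + t * q b"
      unfolding q_def using convex_onD[OF convex] by simp
  qed simp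
  moreover have "(q has_field_derivative f' (y - x)) (at 0)"
  proof -
    have "((\<lambda>t. x + t *\<^sub>R (y - x)) has_derivative (\<lambda>t. t *\<^sub>R (y - x))) (at 0)"
      by (auto intro!: derivative_eq_intros)
    moreover have "(f has_derivative f') (at ((\<lambda>t. x + t *\<^sub>R (y - x)) 0))"
      using deriv by simp
    ultimately have "(q has_derivative (\<lambda>t. f' (t *\<^sub>R (y - x)))) (at 0)"
      using diff_chain_at unfolding q_def o_def by blast
    then show ?thesis
      using linear_scale[OF has_derivative_linear[OF deriv]]
      by (simp add: has_field_derivative_def mult.commute[of _ "f' (y - x)"])
  qed
  ultimately have "f' (y - x) * (1 - 0) \<le> q 1 - q 0"
    by (intro convex_on_imp_above_tangent) auto
  then show ?thesis by (simp add: q_def)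
qed

lemma infdist_closest_point:
  assumes "closed S" "S \<noteq> {}"
  shows "infdist y S = norm (y - closest_point S y)"
proof -
  have "infdist y S = dist y (closest_point S y)"
    unfolding infdist_eq_setdist by (rule setdist_closest_point[OF assms])
  then show ?thesis by (simp add: dist_norm)
qed

lemma norm_closest_point_residual_sq_le:
  assumes "convex S" "closed S" "s \<in> S"
  shows "(norm (y - closest_point S y))\<^sup>2 \<le> (y - closest_point S y) \<bullet> (y - s)"
proof -
  let ?p = "closest_point S y"
  have "(y - ?p) \<bullet> (s - ?p) \<le> 0"
    by (rule closest_point_dot[OF assms])
  moreover have "(y - ?p) \<bullet> (y - s) = (y - ?p) \<bullet> (y - ?p) - (y - ?p) \<bullet> (s - ?p)"
    by (simp add: inner_diff_right)
  ultimately show ?thesis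
    by (simp add: power2_norm_eq_inner)
qed

lemma closest_point_residual_nonneg:
  fixes S :: "(real^'m) set"
  assumes "convex S" "closed S" "S \<noteq> {}" and down: "\<And>y. y \<in> S \<Longrightarrow> y - axis i 1 \<in> S"
  shows "0 \<le> (a - closest_point S a) $ i"
proof -
  have "closest_point S a - axis i 1 \<in> S"
    using down closest_point_in_set[OF assms(2,3)] .
  from closest_point_dot[OF assms(1,2) this, of a]
  show ?thesis by (simp add: inner_axis inner_minus_right)
qed

lemma convex_Qplus:
  fixes Q :: "(real^'m) set"
  assumes "convex Q" shows "convex (Qplus Q)"
proof -
  have "Qplus Q = (\<Union>y\<in>Q. \<Union>u\<in>{u. \<forall>i. 0 \<le> u $ i}. {y - u})"
    unfolding Qplus_def by auto
  moreover have "convex {u :: real^'m. \<forall>i. 0 \<le> u $ i}"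
    by (simp add: convex_def)
  ultimately show ?thesis
    using assms by (simp add: convex_differences)
qed

lemma Qplus_nonempty:
  assumes "Q \<noteq> {}" shows "Qplus Q \<noteq> {}"
proof -
  obtain q where "q \<in> Q" using assms by blast
  then have "q - 0 \<in> Qplus Q" unfolding Qplus_def by fastforce
  then show ?thesis by blast
qed

lemma closure_Qplus_diff_nonneg:
  assumes "y \<in> closure (Qplus Q)" "\<forall>i. 0 \<le> u $ i"
  shows "y - u \<in> closure (Qplus Q)"
proof -
  have "(\<lambda>z. z - u) ` Qplus Q \<subseteq> Qplus Q"
  proof clarify
    fix z assume "z \<in> Qplus Q"
    then obtain q v where "z = q - v" "q \<in> Q" "\<forall>i. 0 \<le> v $ i"
      unfolding Qplus_def by auto
    moreover have "z - u = q - (v + u)" "\<forall>i. 0 \<le> (v + u) $ i"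
      using \<open>z = q - v\<close> \<open>\<forall>i. 0 \<le> v $ i\<close> assms(2) by simp_all
    ultimately show "z - u \<in> Qplus Q"
      unfolding Qplus_def by blast
  qed
  then have "closure ((\<lambda>z. z - u) ` Qplus Q) \<subseteq> closure (Qplus Q)"
    by (rule closure_mono)
  then show ?thesis
    using assms(1) by (auto simp: closure_translation_subtract)
qed

lemma normalized_step_decrease:
  fixes x s d :: "'a::real_inner"
  assumes "0 < \<mu>" "0 \<le> lam" "norm d \<le> M" "0 \<le> e" "e \<le> d \<bullet> (x - s)"
  shows "(norm (x - (lam / max \<mu> (norm d)) *\<^sub>R d - s))\<^sup>2 + 2 * e / max \<mu> M * lam
           \<le> (norm (x - s))\<^sup>2 + lam\<^sup>2"
proof -
  define t where "t = lam / max \<mu> (norm d)"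
  have t_nonneg: "0 \<le> t"
    unfolding t_def using assms(1,2) by simp
  have t_ge: "lam / max \<mu> M \<le> t"
    unfolding t_def using assms(1-3) by (intro divide_left_mono) auto
  have "t * norm d \<le> lam"
    unfolding t_def using assms(1,2) by (simp add: divide_le_eq mult.commute mult_left_mono)
  then have "(t * norm d)\<^sup>2 \<le> lam\<^sup>2"
    using t_nonneg by (intro power_mono) simp_all
  moreover have "(norm (x - s - t *\<^sub>R d))\<^sup>2 = (norm (x - s))\<^sup>2 - 2 * t * (d \<bullet> (x - s)) + (t * norm d)\<^sup>2"
    using dot_norm_neg[of "x - s" "t *\<^sub>R d"] t_nonneg by (simp add: inner_commute)
  moreover have "2 * e / max \<mu> M * lam \<le> 2 * t * (d \<bullet> (x - s))"
  proof -
    have "lam / max \<mu> M * e \<le> t * (d \<bullet> (x - s))"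
      using t_ge t_nonneg assms(4,5) by (intro mult_mono)
    moreover have "2 * e / max \<mu> M * lam = 2 * (lam / max \<mu> M * e)" by simp
    ultimately show ?thesis by linarith
  qed
  ultimately show ?thesis
    unfolding t_def[symmetric] by (simp add: algebra_simps)
qed

lemma not_eventually_uniform_decrease:
  fixes a lam :: "nat \<Rightarrow> real"
  assumes "\<And>k. 0 \<le> a k" "\<And>k. 0 \<le> lam k" "\<not> summable lam" "summable (\<lambda>k. (lam k)\<^sup>2)" "0 < c"
  shows "\<not> (\<forall>\<^sub>F k in sequentially. a (Suc k) + c * lam k \<le> a k + (lam k)\<^sup>2)"
proof
  assume "\<forall>\<^sub>F k in sequentially. a (Suc k) + c * lam k \<le> a k + (lam k)\<^sup>2"
  then obtain N where step: "\<And>k. N \<le> k \<Longrightarrow> a (Suc k) + c * lam k \<le> a k + (lam k)\<^sup>2"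
    by (auto simp: eventually_sequentially)
  have telescope: "a (n + N) + c * (\<Sum>k<n. lam (k + N)) \<le> a N + (\<Sum>k<n. (lam (k + N))\<^sup>2)" for n
  proof (induction n)
    case (Suc n)
    then show ?case using step[of "n + N"] by (simp add: distrib_left)
  qed simp
  have "(\<Sum>k<n. lam (k + N)) \<le> (a N + (\<Sum>k. (lam (k + N))\<^sup>2)) / c" for n
  proof -
    have "(\<Sum>k<n. (lam (k + N))\<^sup>2) \<le> (\<Sum>k. (lam (k + N))\<^sup>2)"
      using assms(4) summable_iff_shift[of "\<lambda>k. (lam k)\<^sup>2" N] by (intro sum_le_suminf) auto
    then show ?thesis
      using telescope[of n] assms(1)[of "n + N"] assms(5) by (simp add: field_simps)
  qed
  then have "summable (\<lambda>k. lam (k + N))"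
    using assms(2) by (intro summableI_nonneg_bounded)
  with assms(3) show False by simp
qed

lemma subseq_tendsto_le_of_frequently_less:
  fixes \<Phi> :: "nat \<Rightarrow> real"
  assumes nonneg: "\<And>k. 0 \<le> \<Phi> k" and freq: "\<And>e. 0 < e \<Longrightarrow> \<exists>\<^sub>F k in sequentially. \<Phi> k < K + e"
  shows "\<exists>kj ell. strict_mono kj \<and> 0 \<le> ell \<and> ell \<le> K \<and> (\<lambda>j. \<Phi> (kj j)) \<longlonglongrightarrow> ell"
proof -
  define X where "X k = ereal (\<Phi> k)" for k
  obtain kj where kj: "strict_mono kj" "(X \<circ> kj) \<longlonglongrightarrow> liminf X"
    using liminf_subseq_lim by blast
  have "0 \<le> liminf X"
    unfolding X_def using nonneg by (intro Liminf_bounded) auto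
  moreover have "liminf X \<le> ereal K"
  proof (rule ereal_le_epsilon2)
    fix e :: real assume "0 < e"
    show "liminf X \<le> ereal K + ereal e"
    proof (rule ccontr)
      assume "\<not> liminf X \<le> ereal K + ereal e"
      then have "\<forall>\<^sub>F k in sequentially. ereal (K + e) < X k"
        using le_Liminf_iff[of "liminf X" sequentially X] by auto
      with freq[OF \<open>0 < e\<close>] have "\<exists>\<^sub>F k in sequentially. False"
        by (rule frequently_eventually_frequently[THEN frequently_elim1]) (auto simp: X_def)
      then show False by simp
    qed
  qed
  ultimately obtain ell where "liminf X = ereal ell" "0 \<le> ell" "ell \<le> K"
    by (cases "liminf X") auto
  with kj show ?thesis
    unfolding X_def o_def by auto
qed

lemma normalized_iteration_frequently_below:
  fixes x d :: "nat \<Rightarrow> 'a::real_inner"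
  assumes iter: "\<And>k. x (Suc k) = x k - (lam k / max \<mu> (norm (d k))) *\<^sub>R d k"
    and bounded: "\<And>k. norm (d k) \<le> M" and "0 < \<mu>"
    and lam: "\<And>k. 0 \<le> lam k" "\<not> summable lam" "summable (\<lambda>k. (lam k)\<^sup>2)"
    and descent: "\<And>k. \<Phi> k - K \<le> d k \<bullet> (x k - s)"
    and "0 < e"
  shows "\<exists>\<^sub>F k in sequentially. \<Phi> k < K + e"
proof (rule ccontr)
  define c where "c = 2 * e / max \<mu> M"
  assume "\<not> (\<exists>\<^sub>F k in sequentially. \<Phi> k < K + e)"
  then have "\<forall>\<^sub>F k in sequentially. K + e \<le> \<Phi> k"
    by (simp add: not_frequently not_less)
  then have "\<forall>\<^sub>F k in sequentially.
      (norm (x (Suc k) - s))\<^sup>2 + c * lam k \<le> (norm (x k - s))\<^sup>2 + (lam k)\<^sup>2"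
  proof (rule eventually_mono)
    fix k assume "K + e \<le> \<Phi> k"
    then have "e \<le> d k \<bullet> (x k - s)"
      using descent[of k] by linarith
    then show "(norm (x (Suc k) - s))\<^sup>2 + c * lam k \<le> (norm (x k - s))\<^sup>2 + (lam k)\<^sup>2"
      unfolding iter c_def
      using normalized_step_decrease[OF \<open>0 < \<mu>\<close> lam(1) bounded, of e] \<open>0 < e\<close> by simp
  qed
  moreover have "0 < c"
    unfolding c_def using \<open>0 < \<mu>\<close> \<open>0 < e\<close> by simp
  ultimately show False
    using not_eventually_uniform_decrease[of "\<lambda>k. (norm (x k - s))\<^sup>2" lam c] lam by simp
qed

lemma component_le_phi: "r $ j * (F y $ j - zstar F C j) \<le> phi F C r y"
  unfolding phi_def by (rule Max_ge) auto

lemma phi_le_iff: "phi F C r y \<le> c \<longleftrightarrow> (\<forall>j. r $ j * (F y $ j - zstar F C j) \<le> c)"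
  unfolding phi_def by (subst Max_le_iff) auto

lemma phi_eq_maximal_component:
  assumes "\<forall>j. r $ j * (F y $ j - zstar F C j) \<le> r $ i * (F y $ i - zstar F C i)"
  shows "phi F C r y = r $ i * (F y $ i - zstar F C i)"
  using assms component_le_phi[where j = i] phi_le_iff by (meson antisym)

lemma Phival_nonneg:
  assumes "0 \<le> a" "0 \<le> b" "0 \<le> c"
  shows "0 \<le> Phival F C Q r a b c y"
  using assms unfolding Phival_def Hfun_def Gfun_def by simp

lemma Phival_lower_bounds:
  assumes "0 \<le> alo" "alo \<le> a" "0 \<le> blo" "blo \<le> b" "0 \<le> clo" "clo \<le> c"
  shows "alo * (phi F C r y - philb F C r) \<le> Phival F C Q r a b c y"
    and "blo * Hfun C y \<le> Phival F C Q r a b c y"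
    and "clo * Gfun F Q y \<le> Phival F C Q r a b c y"
proof -
  define \<Delta> where "\<Delta> = phi F C r y - philb F C r"
  have "0 \<le> Hfun C y" "0 \<le> Gfun F Q y"
    by (simp_all add: Hfun_def Gfun_def)
  then have "0 \<le> a * max \<Delta> 0" "blo * Hfun C y \<le> b * Hfun C y" "0 \<le> b * Hfun C y"
    "clo * Gfun F Q y \<le> c * Gfun F Q y" "0 \<le> c * Gfun F Q y"
    using assms by (auto intro: mult_right_mono)
  moreover have "alo * \<Delta> \<le> a * max \<Delta> 0"
    using assms(1,2)
    by (intro order_trans[OF mult_left_mono[OF max.cobounded1] mult_right_mono]) auto
  moreover have "Phival F C Q r a b c y = a * max \<Delta> 0 + b * Hfun C y + c * Gfun F Q y"
    unfolding Phival_def \<Delta>_def ..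
  ultimately show "alo * (phi F C r y - philb F C r) \<le> Phival F C Q r a b c y"
    and "blo * Hfun C y \<le> Phival F C Q r a b c y"
    and "clo * Gfun F Q y \<le> Phival F C Q r a b c y"
    unfolding \<Delta>_def by linarith+
qed

lemma le_limit_of_continuous_lower_bound:
  fixes g :: "'a::topological_space \<Rightarrow> real"
  assumes "continuous_on UNIV g" "y \<longlonglongrightarrow> x" "P \<longlonglongrightarrow> ell" "\<And>n. g (y n) \<le> P n"
  shows "g x \<le> ell"
  using LIMSEQ_le[OF continuous_on_tendsto_compose[OF assms(1,2)] assms(3)] assms(4) by simp

lemma le_sqrt_of_half_square_le:
  fixes u t :: real
  assumes "u\<^sup>2 / 2 \<le> t"
  shows "u \<le> sqrt (2 * t)"
  using assms by (intro real_le_rsqrt) simp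

locale abp_problem =
  fixes F :: "real^'n \<Rightarrow> real^'m::finite"
    and grad :: "'m \<Rightarrow> real^'n \<Rightarrow> real^'n"
    and C :: "(real^'n) set" and Q :: "(real^'m) set" and r :: "real^'m"
  assumes r_pos: "\<And>i. 0 < r $ i"
    and F_deriv: "\<And>i y. ((\<lambda>u. F u $ i) has_derivative (\<lambda>h. grad i y \<bullet> h)) (at y)"
    and C_nonempty: "C \<noteq> {}" and C_closed: "closed C" and C_convex: "convex C"
    and Q_nonempty: "Q \<noteq> {}" and Q_convex: "convex Q"
    and F_bdd_below: "\<And>i. bdd_below ((\<lambda>u. F u $ i) ` C)"
    and F_convex: "\<And>i. convex_on UNIV (\<lambda>u. F u $ i)"
begin

lemma convex_closed_closure_Qplus:
  "convex (closure (Qplus Q))" "closed (closure (Qplus Q))" "closure (Qplus Q) \<noteq> {}"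
  using convex_Qplus[OF Q_convex] Qplus_nonempty[OF Q_nonempty] by (auto simp: convex_closure)

lemma mem_feas_iff: "x \<in> feas F C Q \<longleftrightarrow> x \<in> C \<and> F x \<in> closure (Qplus Q)"
  using in_closure_iff_infdist_zero[OF C_nonempty] in_closure_iff_infdist_zero[OF Qplus_nonempty[OF Q_nonempty]]
  by (simp add: feas_def Hfun_def Gfun_def closure_closed[OF C_closed])

lemma phi_nonneg:
  assumes "y \<in> C" shows "0 \<le> phi F C r y"
proof -
  have "zstar F C j \<le> F y $ j" for j
    unfolding zstar_def using assms F_bdd_below by (auto intro: cInf_lower)
  then have "0 \<le> r $ j * (F y $ j - zstar F C j)" for j
    using r_pos[of j] by simp
  then show ?thesis
    using component_le_phi order_trans by blast
qed

lemma phistar_le_phi: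
  assumes "y \<in> feas F C Q" shows "phistar F C Q r \<le> phi F C r y"
  unfolding phistar_def using assms mem_feas_iff phi_nonneg
  by (intro cInf_lower) (auto intro!: bdd_belowI[of _ 0])

lemma philb_le_phistar:
  assumes "feas F C Q \<noteq> {}" shows "philb F C r \<le> phistar F C Q r"
  unfolding philb_def phistar_def using assms mem_feas_iff phi_nonneg
  by (intro cInf_superset_mono) (auto intro!: bdd_belowI[of _ 0])

lemma mem_OmegaI:
  assumes "y \<in> feas F C Q" "phi F C r y \<le> phistar F C Q r"
  shows "y \<in> Omega F C Q r"
  using assms phistar_le_phi unfolding Omega_def by (auto intro: antisym)

lemma component_diff_le_grad: "F y $ j - F s $ j \<le> grad j y \<bullet> (y - s)"
  using convex_on_imp_above_tangent_linear[OF F_convex[of j] F_deriv[of j y], of s]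
  by (simp add: inner_diff_right)

lemma Hfun_le_inner:
  assumes "s \<in> C"
  shows "2 * Hfun C y \<le> (y - closest_point C y) \<bullet> (y - s)"
  using norm_closest_point_residual_sq_le[OF C_convex C_closed assms, of y]
  by (simp add: Hfun_def infdist_closest_point[OF C_closed C_nonempty])

lemma Gfun_le_inner:
  fixes y s :: "real^'n"
  assumes "F s \<in> closure (Qplus Q)"
  defines "\<rho> \<equiv> F y - closest_point (closure (Qplus Q)) (F y)"
  shows "2 * Gfun F Q y \<le> (\<Sum>j\<in>UNIV. \<rho> $ j *\<^sub>R grad j y) \<bullet> (y - s)"
proof -
  have "2 * Gfun F Q y = (norm \<rho>)\<^sup>2"
    using infdist_closest_point[OF convex_closed_closure_Qplus(2,3)]
    by (simp add: Gfun_def \<rho>_def infdist_eq_setdist)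
  also have "\<dots> \<le> \<rho> \<bullet> (F y - F s)"
    unfolding \<rho>_def by (rule norm_closest_point_residual_sq_le[OF convex_closed_closure_Qplus(1,2) assms(1)])
  also have "\<dots> = (\<Sum>j\<in>UNIV. \<rho> $ j * (F y $ j - F s $ j))"
    by (simp add: inner_vec_def)
  also have "\<dots> \<le> (\<Sum>j\<in>UNIV. \<rho> $ j * (grad j y \<bullet> (y - s)))"
  proof (rule sum_mono)
    fix j
    have "0 \<le> \<rho> $ j"
      unfolding \<rho>_def using convex_closed_closure_Qplus
      by (intro closest_point_residual_nonneg closure_Qplus_diff_nonneg) (auto simp: axis_def)
    then show "\<rho> $ j * (F y $ j - F s $ j) \<le> \<rho> $ j * (grad j y \<bullet> (y - s))"
      by (intro mult_left_mono component_diff_le_grad)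
  qed
  also have "\<dots> = (\<Sum>j\<in>UNIV. \<rho> $ j *\<^sub>R grad j y) \<bullet> (y - s)"
    by (simp add: inner_sum_left)
  finally show ?thesis .
qed

lemma phi_diff_le_inner:
  assumes "\<forall>j. r $ j * (F y $ j - zstar F C j) \<le> r $ i * (F y $ i - zstar F C i)"
  shows "phi F C r y - phi F C r s \<le> (r $ i *\<^sub>R grad i y) \<bullet> (y - s)"
proof -
  have "phi F C r y - phi F C r s \<le> r $ i * (F y $ i - F s $ i)"
    using phi_eq_maximal_component[OF assms] component_le_phi[where F = F and C = C and r = r and j = i and y = s]
    by (simp add: algebra_simps)
  also have "\<dots> \<le> r $ i * (grad i y \<bullet> (y - s))"
    using r_pos[of i] component_diff_le_grad by (simp add: mult_left_mono)
  finally show ?thesis by simp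
qed

lemma Phival_le_abp_dir_inner:
  assumes s: "s \<in> Omega F C Q r"
    and i_max: "\<forall>j. r $ j * (F y $ j - zstar F C j) \<le> r $ i * (F y $ i - zstar F C i)"
    and "0 \<le> a" "0 \<le> b" "0 \<le> c"
  shows "Phival F C Q r a b c y - a * (phistar F C Q r - philb F C r)
           \<le> abp_dir F grad C Q r a b c i y \<bullet> (y - s)"
proof -
  have s_feas: "s \<in> feas F C Q" and phi_s: "phi F C r s = phistar F C Q r"
    using s by (auto simp: Omega_def)
  define \<Delta> where "\<Delta> = phi F C r y - philb F C r"
  define z where "z = y - closest_point C y"
  define v where "v = (\<Sum>j\<in>UNIV. (F y - closest_point (closure (Qplus Q)) (F y)) $ j *\<^sub>R grad j y)"
  define w where "w = r $ i *\<^sub>R grad i y"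
  have "abp_dir F grad C Q r a b c i y \<bullet> (y - s)
      = (if 0 \<le> \<Delta> then a else 0) * (w \<bullet> (y - s)) + b * (z \<bullet> (y - s)) + c * (v \<bullet> (y - s))"
    unfolding abp_dir_def Let_def \<Delta>_def z_def v_def w_def by (simp add: inner_add_left)
  moreover have "b * Hfun C y \<le> b * (z \<bullet> (y - s))"
  proof -
    have "2 * Hfun C y \<le> z \<bullet> (y - s)" "0 \<le> Hfun C y"
      using Hfun_le_inner[of s y] s_feas by (simp_all add: z_def mem_feas_iff Hfun_def)
    then show ?thesis
      using \<open>0 \<le> b\<close> by (intro mult_left_mono) simp_all
  qed
  moreover have "c * Gfun F Q y \<le> c * (v \<bullet> (y - s))"
  proof -
    have "2 * Gfun F Q y \<le> v \<bullet> (y - s)" "0 \<le> Gfun F Q y"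
      using Gfun_le_inner[of s y] s_feas by (simp_all add: v_def mem_feas_iff Gfun_def)
    then show ?thesis
      using \<open>0 \<le> c\<close> by (intro mult_left_mono) simp_all
  qed
  moreover have "a * max \<Delta> 0 - a * (phistar F C Q r - philb F C r)
      \<le> (if 0 \<le> \<Delta> then a else 0) * (w \<bullet> (y - s))"
  proof (cases "0 \<le> \<Delta>")
    case True
    have "phi F C r y - phistar F C Q r \<le> w \<bullet> (y - s)"
      using phi_diff_le_inner[OF i_max, of s] phi_s unfolding w_def by simp
    then show ?thesis
      using True \<open>0 \<le> a\<close> mult_left_mono unfolding \<Delta>_def by (fastforce simp: right_diff_distrib)
  next
    case False
    have "philb F C r \<le> phistar F C Q r"
      using philb_le_phistar s_feas by blast
    then show ?thesis
      using False \<open>0 \<le> a\<close> by simp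
  qed
  ultimately show ?thesis
    unfolding Phival_def \<Delta>_def by linarith
qed

lemma continuous_on_F: "continuous_on UNIV F"
proof -
  have "continuous_on UNIV (\<lambda>u. \<chi> i. F u $ i)"
    using F_deriv by (intro continuous_on_vec_lambda has_derivative_continuous_on) auto
  then show ?thesis
    by (simp add: vec_lambda_eta)
qed

lemma bounds_at_limit:
  assumes y: "y \<longlonglongrightarrow> x" and Phi: "(\<lambda>n. Phival F C Q r (a n) (b n) (c n) (y n)) \<longlonglongrightarrow> ell"
    and coeffs: "\<And>n. alo \<le> a n \<and> blo \<le> b n \<and> clo \<le> c n" "0 < alo" "0 < blo" "0 < clo"
  shows "Hfun C x \<le> ell / blo" "Gfun F Q x \<le> ell / clo" "phi F C r x \<le> philb F C r + ell / alo"
proof -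
  have bounds:
    "alo * (phi F C r (y n) - philb F C r) \<le> Phival F C Q r (a n) (b n) (c n) (y n)"
    "blo * Hfun C (y n) \<le> Phival F C Q r (a n) (b n) (c n) (y n)"
    "clo * Gfun F Q (y n) \<le> Phival F C Q r (a n) (b n) (c n) (y n)" for n
    using Phival_lower_bounds[of alo "a n" blo "b n" clo "c n"] coeffs by auto
  have "blo * Hfun C x \<le> ell"
    by (rule le_limit_of_continuous_lower_bound[OF _ y Phi bounds(2)])
      (auto simp: Hfun_def intro!: continuous_intros)
  then show "Hfun C x \<le> ell / blo"
    using coeffs(3) by (simp add: field_simps)
  have "clo * Gfun F Q x \<le> ell"
    by (rule le_limit_of_continuous_lower_bound[OF _ y Phi bounds(3)])
      (auto simp: Gfun_def intro!: continuous_intros continuous_on_F)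
  then show "Gfun F Q x \<le> ell / clo"
    using coeffs(4) by (simp add: field_simps)
  have "alo * (r $ j * (F x $ j - zstar F C j) - philb F C r) \<le> ell" for j
  proof (rule le_limit_of_continuous_lower_bound[OF _ y Phi])
    show "continuous_on UNIV (\<lambda>z. alo * (r $ j * (F z $ j - zstar F C j) - philb F C r))"
      by (intro continuous_intros continuous_on_F)
    show "alo * (r $ j * (F (y n) $ j - zstar F C j) - philb F C r)
        \<le> Phival F C Q r (a n) (b n) (c n) (y n)" for n
      using component_le_phi coeffs(2)
      by (intro order_trans[OF mult_left_mono bounds(1)]) auto
  qed
  then show "phi F C r x \<le> philb F C r + ell / alo"
    using coeffs(2) by (simp add: phi_le_iff field_simps)
qed

lemma abp_merit_subsequence:
  fixes x :: "nat \<Rightarrow> real^'n" and istar :: "nat \<Rightarrow> 'm" and \<alpha> \<beta> \<gamma> :: "nat \<Rightarrow> real"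
  defines "d \<equiv> \<lambda>k. abp_dir F grad C Q r (\<alpha> k) (\<beta> k) (\<gamma> k) (istar k) (x k)"
  assumes "Omega F C Q r \<noteq> {}"
    and coeffs: "\<And>k. 0 \<le> \<alpha> k \<and> \<alpha> k \<le> \<alpha>hi \<and> 0 \<le> \<beta> k \<and> 0 \<le> \<gamma> k"
    and gap: "phistar F C Q r - philb F C r \<le> eps0"
    and lam: "\<And>k. 0 \<le> lam k" "\<not> summable lam" "summable (\<lambda>k. (lam k)\<^sup>2)"
    and "0 < \<mu>"
    and argmax: "\<And>k. \<forall>j. r $ j * (F (x k) $ j - zstar F C j)
                        \<le> r $ istar k * (F (x k) $ istar k - zstar F C (istar k))"
    and iter: "\<And>k. x (Suc k) = x k - (lam k / max \<mu> (norm (d k))) *\<^sub>R d k"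
    and bounded: "\<And>k. norm (d k) \<le> M"
  shows "\<exists>kj ell. strict_mono kj \<and> 0 \<le> ell \<and> ell \<le> \<alpha>hi * eps0 \<and>
    (\<lambda>j. Phival F C Q r (\<alpha> (kj j)) (\<beta> (kj j)) (\<gamma> (kj j)) (x (kj j))) \<longlonglongrightarrow> ell"
proof -
  define \<Phi> where "\<Phi> k = Phival F C Q r (\<alpha> k) (\<beta> k) (\<gamma> k) (x k)" for k
  obtain s where s: "s \<in> Omega F C Q r"
    using \<open>Omega F C Q r \<noteq> {}\<close> by blast
  then have "philb F C r \<le> phistar F C Q r"
    using philb_le_phistar by (auto simp: Omega_def)
  have "\<Phi> k - \<alpha>hi * eps0 \<le> d k \<bullet> (x k - s)" for k
  proof -
    have "\<alpha> k * (phistar F C Q r - philb F C r) \<le> \<alpha>hi * eps0"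
      using coeffs[of k] gap \<open>philb F C r \<le> phistar F C Q r\<close> by (intro mult_mono) auto
    moreover have "\<Phi> k - \<alpha> k * (phistar F C Q r - philb F C r) \<le> d k \<bullet> (x k - s)"
      unfolding \<Phi>_def d_def using coeffs[of k]
      by (intro Phival_le_abp_dir_inner[OF s argmax]) simp_all
    ultimately show ?thesis by linarith
  qed
  then have "\<exists>\<^sub>F k in sequentially. \<Phi> k < \<alpha>hi * eps0 + e" if "0 < e" for e
    using normalized_iteration_frequently_below[OF iter bounded \<open>0 < \<mu>\<close> lam] that by blast
  then show ?thesis
    using subseq_tendsto_le_of_frequently_less[of \<Phi>] Phival_nonneg coeffs unfolding \<Phi>_def by blast
qed

lemma cluster_point_bounds:
  assumes "Omega F C Q r \<noteq> {}"
    and Phi: "(\<lambda>j. Phival F C Q r (a j) (b j) (c j) (y j)) \<longlonglongrightarrow> ell" and "0 \<le> ell" "ell \<le> K"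
    and cluster: "\<exists>h. strict_mono h \<and> (y \<circ> h) \<longlonglongrightarrow> x"
    and coeffs: "\<And>n. alo \<le> a n \<and> blo \<le> b n \<and> clo \<le> c n" "0 < alo" "0 < blo" "0 < clo"
  shows "Hfun C x \<le> ell / blo \<and> ell / blo \<le> K / blo \<and> infdist x C \<le> sqrt (2 * K / blo) \<and>
    Gfun F Q x \<le> ell / clo \<and> ell / clo \<le> K / clo \<and> infdist (F x) (Qplus Q) \<le> sqrt (2 * K / clo) \<and>
    phi F C r x \<le> philb F C r + ell / alo \<and> philb F C r + ell / alo \<le> phistar F C Q r + K / alo \<and>
    (K = 0 \<longrightarrow> ell = 0 \<and> x \<in> Omega F C Q r)"
proof -
  obtain h where "strict_mono h" and y_h: "(\<lambda>n. y (h n)) \<longlonglongrightarrow> x"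
    using cluster by (auto simp: o_def)
  have Phi_h: "(\<lambda>n. Phival F C Q r (a (h n)) (b (h n)) (c (h n)) (y (h n))) \<longlonglongrightarrow> ell"
    using LIMSEQ_subseq_LIMSEQ[OF Phi \<open>strict_mono h\<close>] by (simp add: o_def)
  have "alo \<le> a (h n) \<and> blo \<le> b (h n) \<and> clo \<le> c (h n)" for n
    using coeffs(1) by blast
  from bounds_at_limit[OF y_h Phi_h this coeffs(2-4)]
  have H: "Hfun C x \<le> ell / blo" and G: "Gfun F Q x \<le> ell / clo"
    and phi: "phi F C r x \<le> philb F C r + ell / alo" .
  have H_K: "ell / blo \<le> K / blo" and G_K: "ell / clo \<le> K / clo" and phi_K: "ell / alo \<le> K / alo"
    using \<open>ell \<le> K\<close> coeffs by (simp_all add: divide_right_mono)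
  have "infdist x C \<le> sqrt (2 * (K / blo))"
    using order_trans[OF H H_K] unfolding Hfun_def by (rule le_sqrt_of_half_square_le)
  moreover have "infdist (F x) (Qplus Q) \<le> sqrt (2 * (K / clo))"
    using order_trans[OF G G_K] unfolding Gfun_def by (rule le_sqrt_of_half_square_le)
  moreover have "philb F C r \<le> phistar F C Q r"
    using philb_le_phistar \<open>Omega F C Q r \<noteq> {}\<close> by (auto simp: Omega_def)
  moreover have "x \<in> Omega F C Q r" if "ell = 0"
  proof (rule mem_OmegaI)
    show "x \<in> feas F C Q"
      using H G \<open>ell = 0\<close> by (simp add: feas_def Hfun_def Gfun_def)
    show "phi F C r x \<le> phistar F C Q r"
      using phi \<open>ell = 0\<close> \<open>philb F C r \<le> phistar F C Q r\<close> by simp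
  qed
  ultimately show ?thesis
    using H G phi H_K G_K phi_K \<open>0 \<le> ell\<close> \<open>ell \<le> K\<close> by auto
qed

end

theorem theorem2:
  fixes F :: "real^'n \<Rightarrow> real^'m::finite"
    and grad :: "'m \<Rightarrow> real^'n \<Rightarrow> real^'n"
    and C :: "(real^'n) set" and Q :: "(real^'m) set"
    and r :: "real^'m"
    and x :: "nat \<Rightarrow> real^'n" and istar :: "nat \<Rightarrow> 'm"
    and \<mu> :: real and \<alpha> \<beta> \<gamma> lam :: "nat \<Rightarrow> real"
    and \<alpha>lo \<alpha>hi \<beta>lo \<beta>hi \<gamma>lo \<gamma>hi eps0 B Mbar :: real
  assumes r_pos: "\<forall>i. r $ i > 0" and r_sum: "(\<Sum>i\<in>UNIV. r $ i) = 1"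
    and A1_deriv: "\<forall>i y. ((\<lambda>u. F u $ i) has_derivative (\<lambda>h. grad i y \<bullet> h)) (at y)"
    and A1_cont: "\<forall>i. continuous_on UNIV (grad i)"
    and A2_C: "C \<noteq> {}" "closed C" "convex C"
    and A2_Q: "Q \<noteq> {}" "closed Q" "convex Q"
    and A2_z: "\<forall>i. bdd_below ((\<lambda>u. F u $ i) ` C)"
    and A3: "\<forall>i. convex_on UNIV (\<lambda>u. F u $ i)"
    and A4: "Omega F C Q r \<noteq> {}"
    and A5: "\<forall>k. lam k > 0" "\<not> summable lam" "summable (\<lambda>k. (lam k)\<^sup>2)"
    and A6: "0 < \<alpha>lo" "\<alpha>lo \<le> \<alpha>hi" "0 < \<beta>lo" "\<beta>lo \<le> \<beta>hi" "0 < \<gamma>lo" "\<gamma>lo \<le> \<gamma>hi"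
      "\<forall>k. \<alpha>lo \<le> \<alpha> k \<and> \<alpha> k \<le> \<alpha>hi"
      "\<forall>k. \<beta>lo \<le> \<beta> k \<and> \<beta> k \<le> \<beta>hi"
      "\<forall>k. \<gamma>lo \<le> \<gamma> k \<and> \<gamma> k \<le> \<gamma>hi"
    and A7': "0 \<le> eps0" "phistar F C Q r - philb F C r \<le> eps0"
    and A8: "\<forall>k. norm (x k) \<le> B"
    and mu_pos: "\<mu> > 0"
    and istar_argmax: "\<forall>k j. r $ j * (F (x k) $ j - zstar F C j)
                          \<le> r $ istar k * (F (x k) $ istar k - zstar F C (istar k))"
    and iter: "\<forall>k. x (Suc k) = x k -
        (lam k / max \<mu> (norm (abp_dir F grad C Q r (\<alpha> k) (\<beta> k) (\<gamma> k) (istar k) (x k))))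
          *\<^sub>R abp_dir F grad C Q r (\<alpha> k) (\<beta> k) (\<gamma> k) (istar k) (x k)"
    and Mbar: "\<forall>k. norm (abp_dir F grad C Q r (\<alpha> k) (\<beta> k) (\<gamma> k) (istar k) (x k)) \<le> Mbar"
  shows "\<exists>kj ell. strict_mono kj \<and> 0 \<le> ell \<and> ell \<le> (\<alpha>hi * max \<mu> Mbar / \<mu>) * eps0 \<and>
     (\<lambda>j. Phival F C Q r (\<alpha> (kj j)) (\<beta> (kj j)) (\<gamma> (kj j)) (x (kj j))) \<longlonglongrightarrow> ell \<and>
     (\<forall>xh. (\<exists>h. strict_mono h \<and> (x \<circ> kj \<circ> h) \<longlonglongrightarrow> xh) \<longrightarrow>
        Hfun C xh \<le> ell / \<beta>lo \<and> ell / \<beta>lo \<le> (\<alpha>hi * max \<mu> Mbar / \<mu>) * eps0 / \<beta>lo \<and>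
        infdist xh C \<le> sqrt (2 * (\<alpha>hi * max \<mu> Mbar / \<mu>) * eps0 / \<beta>lo) \<and>
        Gfun F Q xh \<le> ell / \<gamma>lo \<and> ell / \<gamma>lo \<le> (\<alpha>hi * max \<mu> Mbar / \<mu>) * eps0 / \<gamma>lo \<and>
        infdist (F xh) (Qplus Q) \<le> sqrt (2 * (\<alpha>hi * max \<mu> Mbar / \<mu>) * eps0 / \<gamma>lo) \<and>
        phi F C r xh \<le> philb F C r + ell / \<alpha>lo \<and>
        philb F C r + ell / \<alpha>lo \<le> phistar F C Q r + (\<alpha>hi * max \<mu> Mbar / \<mu>) * eps0 / \<alpha>lo \<and>
        (eps0 = 0 \<longrightarrow> ell = 0 \<and> xh \<in> Omega F C Q r))"
proof -
  interpret abp_problem F grad C Q r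
    using r_pos A1_deriv A2_C A2_Q A2_z A3 by unfold_locales auto
  have coeffs: "0 \<le> \<alpha> k \<and> \<alpha> k \<le> \<alpha>hi \<and> 0 \<le> \<beta> k \<and> 0 \<le> \<gamma> k" for k
    using A6 by (meson less_le_trans less_imp_le)
  obtain kj ell where kj: "strict_mono kj" "0 \<le> ell" "ell \<le> \<alpha>hi * eps0"
    and lim: "(\<lambda>j. Phival F C Q r (\<alpha> (kj j)) (\<beta> (kj j)) (\<gamma> (kj j)) (x (kj j))) \<longlonglongrightarrow> ell"
    using abp_merit_subsequence[OF A4 coeffs A7'(2) less_imp_le[OF A5(1)[rule_format]] A5(2,3)
        mu_pos spec[OF istar_argmax] iter[rule_format] Mbar[rule_format]] by blast
  have "\<alpha>hi * eps0 \<le> (\<alpha>hi * max \<mu> Mbar / \<mu>) * eps0"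
    using A6 A7' mu_pos by (intro mult_right_mono) (auto simp: field_simps)
  then have "ell \<le> (\<alpha>hi * max \<mu> Mbar / \<mu>) * eps0"
    using kj(3) by linarith
  moreover note cluster_point_bounds[OF A4 lim kj(2) this, where alo = \<alpha>lo and blo = \<beta>lo and clo = \<gamma>lo]
  ultimately show ?thesis
    using kj(1,2) lim A6 by (auto simp: o_def mult.assoc)
qed

end
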